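(* Let $k\ge2$, $N_2=m\ge1$, $N_1=n+1-mk\ge0$, $\eta\in\mathbb C$ with $\hbar=k\eta$, $t=e^{\eta/2}$, $q=e^{\hbar/2}$ (so $q=t^k$). Let $S_0=\bigsqcup_{\ell=1}^{N_2}S_\ell$ with $S_\ell=\{e_{N_1+k(\ell-1)+j}-e_{N_1+k(\ell-1)+j+1}: j=1,\dots,k-1\}$, so $\mathcal D_0=\{x\in V: x_j-x_{j+1}=\eta$ whenever $e_j-e_{j+1}\in S_0\}$, and use the coordinates $x_1,\dots,x_{N_1}$ and $y_\ell=\frac1k\sum_{s=0}^{k-1}x_{N_1+k\ell-s}-\frac{k-1}2\eta$ ($\ell=1,\dots,N_2$) on $\mathcal D_0$ (so $x_{N_1+k\ell-s}=y_\ell+s\eta$ there). Then the restriction of $$M=\sum_{i=1}^{n+1}\prod_{j\ne i}\frac{te^{x_j-x_i}-t^{-1}}{e^{x_j-x_i}-1}\,\mathsf T^\hbar_{x_i}$$ to $\mathcal D_0$ is well defined and equals $$\overline M=\sum_{i=1}^{N_1}\prod_{j=1,j\ne i}^{N_1}\frac{te^{x_j-x_i}-t^{-1}}{e^{x_j-x_i}-1}\prod_{\ell'=1}^{N_2}\frac{qe^{y_{\ell'}-x_i}-q^{-1}}{e^{y_{\ell'}-x_i}-1}\,\mathsf T^\hbar_{x_i}+\frac{q-q^{-1}}{t-t^{-1}}\sum_{\ell=1}^{N_2}\prod_{j=1}^{N_1}\frac{te^{x_j-y_\ell}-t^{-1}}{e^{x_j-y_\ell}-1}\prod_{\ell'\ne\ell}\frac{qe^{y_{\ell'}-y_\ell}-q^{-1}}{e^{y_{\ell'}-y_\ell}-1}\,\mathsf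 T^\eta_{y_\ell}.$$
   Context: $R=A_n=\{e_i-e_j:i\ne j\}$ realized in $V=\{x=\sum_{i=1}^{n+1}x_ie_i\in\mathbb C^{n+1}:\sum x_i=0\}$, $\{e_i\}$ orthonormal. Functions on $V$ are regarded as functions of $x_1,\dots,x_{n+1}$ invariant under simultaneous shift of all variables; $\mathsf T^a_z$ denotes the shift $z\mapsto z+a$ in the variable $z$, so $\mathsf T^\hbar_{x_i}=\tau(-\hat e_i)$ where $\hat e_i$ is the orthogonal projection of $e_i$ onto $V$ and $(\tau(\lambda)f)(x)=f(x-\hbar\lambda)$. $\hbar\in\mathbb C\setminus\pi i\mathbb Q$. For $S_0$ a set of simple roots, $\overline V=\{x\in V:(\alpha,x)=0\ \forall\alpha\in S_0\}$ and $\bar\lambda$ the orthogonal projection onto $\overline V$. The restriction of a difference operator $D=\sum_\lambda g_\lambda\tau(\lambda)$ to $\mathcal D_0$ is $\overline D=\sum_{\lambda'}\big(\sum_{\bar\lambda=\lambda'}g_\lambda\big)\big|_{\mathcal D_0}\tau(\lambda')$, provided each such restricted coefficient is a well-defined meromorphic function on $\mathcal D_0$. *)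

theory Defs
  imports "HOL-Analysis.Analysis"
begin

text \<open>Vectors of C^(n+1) are functions nat => complex, indices 1..n+1
  (components outside 1..n+1 are irrelevant / zero for elements of V).
  A difference operator  sum_lam g_lam tau(lam)  is represented by the map
  lam |-> g_lam (coefficient functions); only finitely many are nonzero.\<close>

type_synonym vec = "nat \<Rightarrow> complex"
type_synonym diffop = "vec \<Rightarrow> vec \<Rightarrow> complex"

definition Vsp :: "nat \<Rightarrow> vec set" where
  "Vsp n = {x. (\<forall>i. i \<notin> {1..n+1} \<longrightarrow> x i = 0) \<and> (\<Sum>i=1..n+1. x i) = 0}"

definition binner :: "nat \<Rightarrow> vec \<Rightarrow> vec \<Rightarrow> complex" where
  "binner n x y = (\<Sum>i=1..n+1. x i * y i)"

text \<open>Indices j such that e_j - e_(j+1) belongs to S_0 = union of the S_l.\<close>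
definition S0idx :: "nat \<Rightarrow> nat \<Rightarrow> nat \<Rightarrow> nat set" where
  "S0idx N1 m k = {N1 + k*(l-1) + j | l j. l \<in> {1..m} \<and> j \<in> {1..k-1}}"

definition Vbar :: "nat \<Rightarrow> nat \<Rightarrow> nat \<Rightarrow> nat \<Rightarrow> vec set" where
  "Vbar n N1 m k = {x \<in> Vsp n. \<forall>j\<in>S0idx N1 m k. x j - x (Suc j) = 0}"

definition proj :: "nat \<Rightarrow> nat \<Rightarrow> nat \<Rightarrow> nat \<Rightarrow> vec \<Rightarrow> vec" where
  "proj n N1 m k lam = (THE mu. mu \<in> Vbar n N1 m k \<and>
      (\<forall>v\<in>Vbar n N1 m k. binner n (\<lambda>i. lam i - mu i) v = 0))"

definition D0 :: "nat \<Rightarrow> nat \<Rightarrow> nat \<Rightarrow> nat \<Rightarrow> complex \<Rightarrow> vec set" where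
  "D0 n N1 m k eta = {x \<in> Vsp n. \<forall>j\<in>S0idx N1 m k. x j - x (Suc j) = eta}"

text \<open>Coefficient of tau(lam') in the restriction of D (to be evaluated at points of D0).\<close>
definition restr :: "nat \<Rightarrow> nat \<Rightarrow> nat \<Rightarrow> nat \<Rightarrow> diffop \<Rightarrow> diffop" where
  "restr n N1 m k D lam' x =
     (\<Sum>lam \<in> {lam. D lam \<noteq> (\<lambda>_. 0) \<and> proj n N1 m k lam = lam'}. D lam x)"

text \<open>The shift vector lam in V such that tau(lam) f (x) = f(x - hbar lam) = f(x + d),
  modulo simultaneous shift of all variables.\<close>
definition shiftop :: "nat \<Rightarrow> complex \<Rightarrow> vec \<Rightarrow> vec" where
  "shiftop n hbar d = (\<lambda>i. if i \<in> {1..n+1}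
      then - (d i - (\<Sum>j=1..n+1. d j) / of_nat (n+1)) / hbar else 0)"

text \<open>T^a_(x_i): shift of the variable x_i by a (for a = hbar this is tau(- hat e_i)).\<close>
definition Tsh :: "nat \<Rightarrow> complex \<Rightarrow> complex \<Rightarrow> nat \<Rightarrow> vec" where
  "Tsh n hbar a i = shiftop n hbar (\<lambda>j. if j = i then a else 0)"

text \<open>T^a_(y_l) on D0: shifting y_l by a (other coordinates fixed) means shifting all
  x_(N1+k(l-1)+1), ..., x_(N1+kl) by a.\<close>
definition Tblock :: "nat \<Rightarrow> nat \<Rightarrow> nat \<Rightarrow> complex \<Rightarrow> complex \<Rightarrow> nat \<Rightarrow> vec" where
  "Tblock n N1 k hbar a l =
     shiftop n hbar (\<lambda>j. if j \<in> {N1+k*(l-1)+1..N1+k*l} then a else 0)"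

definition cfac :: "complex \<Rightarrow> complex \<Rightarrow> complex" where
  "cfac t u = (t * exp u - inverse t) / (exp u - 1)"

definition Mop :: "nat \<Rightarrow> complex \<Rightarrow> complex \<Rightarrow> diffop" where
  "Mop n t hbar lam x = (\<Sum>i=1..n+1.
      if lam = Tsh n hbar hbar i then (\<Prod>j\<in>{1..n+1}-{i}. cfac t (x j - x i)) else 0)"

definition ycoord :: "nat \<Rightarrow> nat \<Rightarrow> complex \<Rightarrow> vec \<Rightarrow> nat \<Rightarrow> complex" where
  "ycoord N1 k eta x l =
     (1 / of_nat k) * (\<Sum>s=0..k-1. x (N1 + k*l - s)) - (of_nat k - 1) / 2 * eta"

definition Mbar :: "nat \<Rightarrow> nat \<Rightarrow> nat \<Rightarrow> nat \<Rightarrow> complex \<Rightarrow> complex \<Rightarrow> complex \<Rightarrow> complex \<Rightarrow> diffop" where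
  "Mbar n N1 m k eta t q hbar lam x =
     (\<Sum>i=1..N1. if lam = Tsh n hbar hbar i then
         (\<Prod>j\<in>{1..N1}-{i}. cfac t (x j - x i)) *
         (\<Prod>l'=1..m. cfac q (ycoord N1 k eta x l' - x i)) else 0)
   + (q - inverse q) / (t - inverse t) *
     (\<Sum>l=1..m. if lam = Tblock n N1 k hbar eta l then
         (\<Prod>j=1..N1. cfac t (x j - ycoord N1 k eta x l)) *
         (\<Prod>l'\<in>{1..m}-{l}. cfac q (ycoord N1 k eta x l' - ycoord N1 k eta x l)) else 0)"

end

theory Submission
  imports Defs
begin

(* Projected onto Vbar, the shift T^hbar_(x_i) stays fixed when i is free and becomes
   the string shift T^eta_(y_l) when i lies in string l.  So the coefficient of the
   restriction at a shift is the sum of the coefficients Mcoeff i of M over the indices i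
   whose shift projects to it.  On D0, Mcoeff i vanishes unless i is free or the last index
   of its string, because it contains the factor cfac t (-eta) = 0; and the products over a
   string telescope, prod_(s<k) cfac t (u + s eta) = cfac q u, producing the q-factors and
   the constant (q - 1/q)/(t - 1/t). *)

section \<open>Non-resonance and telescoping identities\<close>

lemma exp_multiple_ne_1:
  fixes eta hbar :: complex and k s :: nat
  assumes "hbar = of_nat k * eta" and "\<forall>r\<in>\<rat>. hbar \<noteq> of_real pi * \<i> * r" and "s \<ge> 1"
  shows "exp (of_nat s * eta) \<noteq> 1"
proof
  assume "exp (of_nat s * eta) = 1"
  then obtain z :: int where "Re (of_nat s * eta) = 0" and "Im (of_nat s * eta) = of_int (2*z) * pi"
    by (auto simp: exp_eq_1)
  hence "of_nat s * eta = \<i> * of_real (of_int (2*z) * pi)"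
    by (simp add: complex_eq_iff)
  hence "hbar = of_real pi * \<i> * (of_int (2*z*int k) / of_nat s)"
    using assms(1,3) by (simp add: field_simps)
  moreover have "(of_int (2*z*int k) / of_nat s :: complex) \<in> \<rat>" by simp
  ultimately show False using assms(2) by blast
qed

lemma nonresonant_ne_0:
  fixes hbar :: complex
  assumes "\<forall>r\<in>\<rat>. hbar \<noteq> of_real pi * \<i> * r"
  shows "hbar \<noteq> 0"
  using assms[rule_format, of 0] by simp

text \<open>Abstract telescoping: with a = exp u and e = exp (eta/2), the factor
  cfac e (u + s eta) equals (e a e^(2s) - 1/e) / (a e^(2s) - 1), and consecutive
  numerators and denominators cancel.\<close>

lemma telescope_product:
  fixes a e :: complex
  assumes e: "e \<noteq> 0" and ne: "\<forall>s<K. a * e ^ (2 * s) \<noteq> 1"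
  shows "(\<Prod>s<K. (e * (a * e ^ (2 * s)) - inverse e) / (a * e ^ (2 * s) - 1)) * (a - 1)
         = (a * e ^ (2*K) - 1) / e^K"
  using ne
proof (induction K)
  case 0 then show ?case by simp
next
  case (Suc K)
  define F where "F s = (e * (a * e ^ (2 * s)) - inverse e) / (a * e ^ (2 * s) - 1)" for s
  have IH: "(\<Prod>s<K. F s) * (a - 1) = (a * e ^ (2*K) - 1) / e^K"
    using Suc unfolding F_def by auto
  have nz: "a * e ^ (2*K) - 1 \<noteq> 0" using Suc.prems by auto
  have "(\<Prod>s<Suc K. F s) * (a - 1) = ((\<Prod>s<K. F s) * (a - 1)) * F K"
    by (simp add: mult_ac)
  also have "\<dots> = (a * e ^ (2*K) - 1) / e^K * F K"
    by (simp only: IH)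
  also have "\<dots> = (e * (a * e ^ (2*K)) - inverse e) / e^K"
    unfolding F_def using nz by simp
  also have "\<dots> = (a * e ^ (2 * Suc K) - 1) / e ^ (Suc K)"
    using e by (simp add: field_simps power2_eq_square)
  finally show ?case unfolding F_def .
qed

lemma exp_plus_multiple:
  fixes u eta :: complex
  shows "exp (u + of_nat s * eta) = exp u * exp (eta/2) ^ (2 * s)"
proof -
  have "exp (of_nat s * eta) = exp (of_nat (2 * s) * (eta/2))" by simp
  also have "\<dots> = exp (eta/2) ^ (2 * s)" by (rule exp_of_nat_mult)
  finally show ?thesis by (simp add: exp_add)
qed

lemma cfac_string_product:
  fixes u eta :: complex and K :: nat
  assumes K: "K \<ge> 1" and ne: "\<forall>s<K. exp (u + of_nat s * eta) \<noteq> 1"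
  shows "(\<Prod>s<K. cfac (exp (eta/2)) (u + of_nat s * eta)) = cfac (exp (of_nat K * eta / 2)) u"
proof -
  define e where "e = exp (eta/2)"
  define a where "a = exp u"
  have e0: "e \<noteq> 0" unfolding e_def by simp
  have ne': "\<forall>s<K. a * e ^ (2 * s) \<noteq> 1" using ne unfolding a_def e_def exp_plus_multiple by simp
  have a1: "a - 1 \<noteq> 0" using ne'[rule_format, of 0] K by simp
  have "(\<Prod>s<K. cfac (exp (eta/2)) (u + of_nat s * eta))
      = (\<Prod>s<K. (e * (a * e ^ (2 * s)) - inverse e) / (a * e ^ (2 * s) - 1))"
    unfolding cfac_def exp_plus_multiple a_def e_def by simp
  also have "\<dots> = (a * e ^ (2*K) - 1) / e^K / (a - 1)"
    using eq_divide_imp[OF a1 telescope_product[OF e0 ne']] by simp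
  also have "\<dots> = cfac (e^K) u"
    unfolding cfac_def a_def[symmetric] using e0 a1 by (simp add: field_simps power_mult power2_eq_square)
  also have "e^K = exp (of_nat K * eta / 2)"
    unfolding e_def by (metis exp_of_nat_mult times_divide_eq_right)
  finally show ?thesis .
qed

text \<open>The factors of a string against its own last point give the quantum number
  (q - 1/q)/(t - 1/t) = [k]_t, as the special case u = eta, K = k - 1.\<close>

lemma cfac_own_string:
  fixes eta :: complex and k :: nat
  assumes k: "k \<ge> 2" and ne: "\<forall>s. s \<ge> 1 \<longrightarrow> exp (of_nat s * eta) \<noteq> 1"
  shows "(\<Prod>s<k-1. cfac (exp (eta/2)) (of_nat (Suc s) * eta))
       = (exp (of_nat k * eta / 2) - inverse (exp (of_nat k * eta / 2)))
         / (exp (eta/2) - inverse (exp (eta/2)))"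
proof -
  define e where "e = exp (eta/2)"
  have e0: "e \<noteq> 0" unfolding e_def by simp
  have e2: "exp eta = e^2" unfolding e_def by (simp flip: exp_double)
  have e21: "e^2 - 1 \<noteq> 0" using ne[rule_format, of 1] e2 by simp
  have pow: "exp (of_nat j * eta / 2) = e ^ j" for j
    unfolding e_def by (metis exp_of_nat_mult times_divide_eq_right)
  have "(\<Prod>s<k-1. cfac e (of_nat (Suc s) * eta)) = (\<Prod>s<k-1. cfac e (eta + of_nat s * eta))"
    by (simp add: algebra_simps)
  also have "\<dots> = cfac (exp (of_nat (k-1) * eta / 2)) eta"
    unfolding e_def
  proof (rule cfac_string_product)
    show "\<forall>s<k-1. exp (eta + of_nat s * eta) \<noteq> 1"
    proof (intro allI impI)
      fix s
      have "eta + of_nat s * eta = of_nat (Suc s) * eta" by (simp add: algebra_simps)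
      thus "exp (eta + of_nat s * eta) \<noteq> 1" using ne[rule_format, of "Suc s"] by simp
    qed
  qed (use k in simp)
  also have "\<dots> = (e ^ (k-1) * e^2 - inverse (e ^ (k-1))) / (e^2 - 1)"
    unfolding pow cfac_def e2 ..
  also have "\<dots> = (e^k - inverse (e^k)) / (e - inverse e)"
  proof -
    have "e ^ k = e * e ^ (k-1)" using k by (metis Suc_diff_1 less_le_trans pos2 power_Suc)
    thus ?thesis using e0 e21 by (simp add: field_simps power2_eq_square)
  qed
  finally show ?thesis unfolding e_def pow .
qed

section \<open>The strings of D0\<close>

abbreviation string_idx :: "nat \<Rightarrow> nat \<Rightarrow> nat \<Rightarrow> nat set" where
  "string_idx N1 k l \<equiv> {N1 + k*(l-1) + 1 .. N1 + k*l}"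

lemma S0idxI:
  assumes "1 \<le> l" "l \<le> m" "1 \<le> j" "j \<le> k - 1" "a = N1 + k*(l-1) + j"
  shows "a \<in> S0idx N1 m k"
  using assms unfolding S0idx_def by auto

lemma S0idxE:
  assumes "a \<in> S0idx N1 m k"
  obtains l where "1 \<le> l" "l \<le> m" "a \<in> string_idx N1 k l" "Suc a \<in> string_idx N1 k l"
proof -
  obtain l j where "a = N1 + k*(l-1) + j" "l \<in> {1..m}" "j \<in> {1..k-1}"
    using assms unfolding S0idx_def by auto
  moreover have "k*l = k*(l-1) + k" using \<open>l \<in> {1..m}\<close> by (cases l) auto
  ultimately show ?thesis using that by auto
qed

lemma string_idx_unique:
  assumes "a \<in> string_idx N1 k l" "a \<in> string_idx N1 k l'" "1 \<le> l" "1 \<le> l'"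
  shows "l = l'"
proof (rule ccontr)
  assume "l \<noteq> l'"
  hence "l \<le> l' - 1 \<or> l' \<le> l - 1" by auto
  hence "k*l \<le> k*(l'-1) \<or> k*l' \<le> k*(l-1)" by (metis mult_le_mono2)
  moreover have "N1 + k*(l-1) + 1 \<le> a" "a \<le> N1 + k*l" "N1 + k*(l'-1) + 1 \<le> a" "a \<le> N1 + k*l'"
    using assms(1,2) by auto
  ultimately show False by linarith
qed

text \<open>For points of D0 this is the string
  structure x_(N1+kl-s) = y_l + s eta; for vectors of Vbar (c = 0) it is constancy.\<close>

lemma string_progression:
  fixes x :: "nat \<Rightarrow> complex"
  assumes S: "\<forall>j\<in>S0idx N1 m k. x j - x (Suc j) = c"
    and l: "1 \<le> l" "l \<le> m" and ab: "N1 + k*(l-1) + 1 \<le> a" "a \<le> b" "b \<le> N1 + k*l"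
  shows "x a = x b + of_nat (b - a) * c"
  using ab
proof (induction "b - a" arbitrary: a)
  case 0
  then show ?case by simp
next
  case (Suc d)
  have "a \<in> S0idx N1 m k"
  proof (rule S0idxI[OF l, of "a - N1 - k*(l-1)"])
    have "k*l = k*(l-1) + k" using l by (cases l) auto
    then show "a - N1 - k * (l - 1) \<le> k - 1" using Suc.prems Suc.hyps by linarith
  qed (use Suc in auto)
  hence "x a = x (Suc a) + c" using S by (auto simp: algebra_simps)
  moreover have "x (Suc a) = x b + of_nat (b - Suc a) * c"
    using Suc.hyps Suc.prems by (intro Suc.hyps(1)) auto
  moreover have "b - a = Suc (b - Suc a)" using Suc by auto
  ultimately show ?case by (simp add: algebra_simps)
qed

lemma interval_split_strings: "{a+1..a + Suc M * K} = {a+1..a+M*K} \<union> {a+M*K+1..a+M*K+K}"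
  for a M K :: nat
  by auto

lemma sum_over_strings:
  fixes f :: "nat \<Rightarrow> 'a::comm_monoid_add"
  shows "(\<Sum>i\<in>{a+1..a+M*K}. f i) = (\<Sum>l\<in>{1..M}. \<Sum>s<K. f (a + K*l - s))"
proof (induction M)
  case 0 then show ?case by simp
next
  case (Suc M)
  have "(\<Sum>i\<in>{a+1..a+Suc M*K}. f i) = (\<Sum>i\<in>{a+1..a+M*K}. f i) + (\<Sum>i\<in>{a+M*K+1..a+M*K+K}. f i)"
    unfolding interval_split_strings by (rule sum.union_disjoint) auto
  also have "(\<Sum>i\<in>{a+M*K+1..a+M*K+K}. f i) = (\<Sum>s<K. f (a + K * Suc M - s))"
    by (rule sum.reindex_bij_witness[of _ "\<lambda>i. a + K * Suc M - i" "\<lambda>s. a + K * Suc M - s"])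
       (auto simp: algebra_simps)
  finally show ?case using Suc by simp
qed

lemma prod_over_strings:
  fixes f :: "nat \<Rightarrow> 'a::comm_monoid_mult"
  shows "(\<Prod>i\<in>{a+1..a+M*K}. f i) = (\<Prod>l\<in>{1..M}. \<Prod>s<K. f (a + K*l - s))"
proof (induction M)
  case 0 then show ?case by simp
next
  case (Suc M)
  have "(\<Prod>i\<in>{a+1..a+Suc M*K}. f i) = (\<Prod>i\<in>{a+1..a+M*K}. f i) * (\<Prod>i\<in>{a+M*K+1..a+M*K+K}. f i)"
    unfolding interval_split_strings by (rule prod.union_disjoint) auto
  also have "(\<Prod>i\<in>{a+M*K+1..a+M*K+K}. f i) = (\<Prod>s<K. f (a + K * Suc M - s))"
    by (rule prod.reindex_bij_witness[of _ "\<lambda>i. a + K * Suc M - i" "\<lambda>s. a + K * Suc M - s"])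
       (auto simp: algebra_simps)
  finally show ?case using Suc by simp
qed

section \<open>Orthogonal projection onto Vbar\<close>

lemma Vbar_diff:
  assumes "u \<in> Vbar n N1 m k" "v \<in> Vbar n N1 m k"
  shows "(\<lambda>i. u i - v i) \<in> Vbar n N1 m k"
proof -
  have "(\<Sum>i=1..n+1. u i - v i) = (\<Sum>i=1..n+1. u i) - (\<Sum>i=1..n+1. v i)" by (rule sum_subtractf)
  also have "\<dots> = 0" using assms unfolding Vbar_def Vsp_def by simp
  finally show ?thesis using assms unfolding Vbar_def Vsp_def by auto
qed

lemma Vbar_scale:
  assumes "v \<in> Vbar n N1 m k"
  shows "(\<lambda>i. c * v i) \<in> Vbar n N1 m k"
proof -
  have "(\<Sum>i=1..n+1. c * v i) = c * (\<Sum>i=1..n+1. v i)" by (rule sum_distrib_left[symmetric])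
  also have "\<dots> = 0" using assms unfolding Vbar_def Vsp_def by simp
  finally show ?thesis using assms unfolding Vbar_def Vsp_def by (auto simp: right_diff_distrib[symmetric])
qed

lemma Vbar_cnj:
  assumes "v \<in> Vbar n N1 m k"
  shows "(\<lambda>i. cnj (v i)) \<in> Vbar n N1 m k"
proof -
  have "(\<Sum>i=1..n+1. cnj (v i)) = cnj (\<Sum>i=1..n+1. v i)" by simp
  also have "\<dots> = 0" using assms unfolding Vbar_def Vsp_def by simp
  finally show ?thesis using assms unfolding Vbar_def Vsp_def by (auto simp flip: complex_cnj_diff)
qed

lemma D0_translate:
  assumes "x \<in> D0 n N1 m k eta" "v \<in> Vbar n N1 m k"
  shows "(\<lambda>i. x i + v i) \<in> D0 n N1 m k eta"
  using assms unfolding Vbar_def Vsp_def D0_def by (auto simp: sum.distrib algebra_simps)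

text \<open>Uniqueness holds because the difference d of two
  candidates lies in Vbar, so  0 = binner d (cnj d) = sum |d_i|^2.\<close>

lemma proj_eqI:
  assumes mu: "mu \<in> Vbar n N1 m k"
    and orth: "\<forall>v\<in>Vbar n N1 m k. binner n (\<lambda>i. lam i - mu i) v = 0"
  shows "proj n N1 m k lam = mu"
  unfolding proj_def
proof (rule the_equality)
  show "mu \<in> Vbar n N1 m k \<and> (\<forall>v\<in>Vbar n N1 m k. binner n (\<lambda>i. lam i - mu i) v = 0)"
    using assms by blast
next
  fix mu'
  assume mu': "mu' \<in> Vbar n N1 m k \<and> (\<forall>v\<in>Vbar n N1 m k. binner n (\<lambda>i. lam i - mu' i) v = 0)"
  define d where "d i = mu' i - mu i" for i
  have dV: "d \<in> Vbar n N1 m k" unfolding d_def using mu' mu by (intro Vbar_diff) auto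
  have cV: "(\<lambda>i. cnj (d i)) \<in> Vbar n N1 m k" by (rule Vbar_cnj[OF dV])
  have "binner n d (\<lambda>i. cnj (d i))
      = binner n (\<lambda>i. lam i - mu i) (\<lambda>i. cnj (d i)) - binner n (\<lambda>i. lam i - mu' i) (\<lambda>i. cnj (d i))"
    unfolding binner_def d_def sum_subtractf[symmetric] by (rule sum.cong) (auto simp: algebra_simps)
  also have "\<dots> = 0" using orth mu' cV by simp
  finally have "(\<Sum>i=1..n+1. d i * cnj (d i)) = 0"
    unfolding binner_def .
  hence "(\<Sum>i=1..n+1. complex_of_real ((cmod (d i))^2)) = 0"
    by (simp only: complex_norm_square)
  hence "(\<Sum>i=1..n+1. (cmod (d i))^2) = 0"
    by (metis of_real_eq_0_iff of_real_sum)
  hence "\<forall>i\<in>{1..n+1}. d i = 0"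
    by (subst (asm) sum_nonneg_eq_0_iff) auto
  moreover have "\<forall>i. i \<notin> {1..n+1} \<longrightarrow> d i = 0" using dV unfolding Vbar_def Vsp_def by auto
  ultimately show "mu' = mu" unfolding d_def by (auto simp: fun_eq_iff)
qed

section \<open>Avoiding countably many parameters\<close>

text \<open>exp (a + e d) = 1 for only countably many real e when d is nonzero, since
  a + e d then ranges over the discrete set 2 pi i Z.\<close>

lemma countable_exp_line_eq_1:
  fixes a d :: complex
  assumes d: "d \<noteq> 0"
  shows "countable {e::real. exp (a + of_real e * d) = 1}"
proof (rule countable_subset)
  show "{e::real. exp (a + of_real e * d) = 1}
        \<subseteq> range (\<lambda>z::int. Re ((\<i> * of_real (of_int (2*z) * pi) - a) / d))"
  proof
    fix e :: real
    assume "e \<in> {e. exp (a + of_real e * d) = 1}"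
    then obtain z :: int where "Re (a + of_real e * d) = 0" "Im (a + of_real e * d) = of_int (2*z) * pi"
      by (auto simp: exp_eq_1)
    hence "a + of_real e * d = \<i> * of_real (of_int (2*z) * pi)" by (simp add: complex_eq_iff)
    hence "of_real e = (\<i> * of_real (of_int (2*z) * pi) - a) / d" using d by (simp add: field_simps)
    hence "e = Re ((\<i> * of_real (of_int (2*z) * pi) - a) / d)" by (metis Re_complex_of_real)
    thus "e \<in> range (\<lambda>z::int. Re ((\<i> * of_real (of_int (2*z) * pi) - a) / d))" by blast
  qed
qed simp

text \<open>Every nonempty open interval is uncountable, so 0 is a limit of reals outside any
  countable set.\<close>

lemma null_sequence_avoiding:
  assumes "countable (B :: real set)"
  obtains eps :: "nat \<Rightarrow> real" where "eps \<longlonglongrightarrow> 0" and "\<And>N. eps N \<notin> B"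
proof -
  have "\<exists>e. e \<in> {0<..<inverse (real (Suc N))} \<and> e \<notin> B" for N
  proof (rule ccontr)
    assume "\<nexists>e. e \<in> {0<..<inverse (real (Suc N))} \<and> e \<notin> B"
    hence "{0<..<inverse (real (Suc N))} \<subseteq> B" by auto
    hence "countable {0<..<inverse (real (Suc N))}" using assms countable_subset by blast
    moreover have "uncountable {0<..<inverse (real (Suc N))}" by (subst uncountable_open_interval) simp
    ultimately show False by blast
  qed
  then obtain eps where eps: "\<And>N. eps N \<in> {0<..<inverse (real (Suc N))} \<and> eps N \<notin> B" by metis
  have lim: "eps \<longlonglongrightarrow> 0"
  proof (rule tendsto_sandwich[of "\<lambda>_. 0" _ _ "\<lambda>N. inverse (real (Suc N))"])
    show "\<forall>\<^sub>F N in sequentially. 0 \<le> eps N" "\<forall>\<^sub>F N in sequentially. eps N \<le> inverse (real (Suc N))"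
      using eps by (auto intro: always_eventually less_imp_le)
  qed (simp_all only: LIMSEQ_inverse_real_of_nat tendsto_const)
  show ?thesis by (rule that[OF lim]) (use eps in blast)
qed

section \<open>The restriction of M\<close>

text \<open>The hypotheses of the theorem.\<close>

locale string_restriction =
  fixes n N1 m k :: nat and eta hbar t q :: complex
  assumes k2: "k \<ge> 2" and dim: "n + 1 = N1 + m * k"
    and hbar_def: "hbar = of_nat k * eta"
    and nonresonant: "\<forall>r\<in>\<rat>. hbar \<noteq> of_real pi * \<i> * r"
    and t_def: "t = exp (eta / 2)" and q_def: "q = exp (hbar / 2)"
begin

abbreviation blk :: "nat \<Rightarrow> nat set" where
  "blk l \<equiv> string_idx N1 k l"

lemma hbar_ne_0: "hbar \<noteq> 0"
  by (rule nonresonant_ne_0[OF nonresonant])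

lemma eta_ne_0: "eta \<noteq> 0"
  using hbar_ne_0 hbar_def by auto

lemma k_ne_0: "(of_nat k :: complex) \<noteq> 0"
  using k2 by auto

lemma exp_eta_multiple_ne_1: "1 \<le> s \<Longrightarrow> exp (of_nat s * eta) \<noteq> 1"
  by (rule exp_multiple_ne_1[OF hbar_def nonresonant])

lemma q_eq: "q = exp (of_nat k * eta / 2)"
  using q_def hbar_def by simp

lemma string_end: "1 \<le> l \<Longrightarrow> k*l = k*(l-1) + k"
  by (cases l) auto

lemma string_mem: "1 \<le> l \<Longrightarrow> s < k \<Longrightarrow> N1 + k*l - s \<in> blk l"
  using string_end[of l] by auto

lemma string_sub: "1 \<le> l \<Longrightarrow> l \<le> m \<Longrightarrow> blk l \<subseteq> {1..n+1}"
proof -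
  assume "1 \<le> l" "l \<le> m"
  hence "k*l \<le> k*m" by simp
  thus "blk l \<subseteq> {1..n+1}" using dim by (auto simp: mult.commute)
qed

lemma sum_string_const: "1 \<le> l \<Longrightarrow> (\<Sum>j\<in>blk l. c) = of_nat k * (c::complex)"
  using string_end[of l] by simp

lemma sum_restrict_string:
  "1 \<le> l \<Longrightarrow> l \<le> m \<Longrightarrow> (\<Sum>j=1..n+1. if j \<in> blk l then f j else 0) = (\<Sum>j\<in>blk l. f j :: complex)"
proof -
  assume "1 \<le> l" "l \<le> m"
  have "(\<Sum>j=1..n+1. if j \<in> blk l then f j else 0) = (\<Sum>j\<in>{1..n+1} \<inter> blk l. f j)"
    by (rule sum.inter_restrict[symmetric]) simp
  also have "{1..n+1} \<inter> blk l = blk l" using string_sub[OF \<open>1 \<le> l\<close> \<open>l \<le> m\<close>] by blast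
  finally show ?thesis .
qed

lemma Tsh_eq:
  assumes i: "i \<in> {1..n+1}"
  shows "Tsh n hbar hbar i =
    (\<lambda>j. if j \<in> {1..n+1} then (if j = i then -1 else 0) + 1 / of_nat (n+1) else 0)"
proof -
  have "(\<Sum>j=1..n+1. (if j = i then hbar else 0)) = hbar" using i by (simp add: sum.delta')
  thus ?thesis unfolding Tsh_def shiftop_def using hbar_ne_0 by (auto simp: field_simps)
qed

lemma Tblock_eq:
  assumes l: "1 \<le> l" "l \<le> m"
  shows "Tblock n N1 k hbar eta l =
    (\<lambda>j. if j \<in> {1..n+1} then (if j \<in> blk l then - 1 / of_nat k else 0) + 1 / of_nat (n+1) else 0)"
proof -
  have "(\<Sum>j=1..n+1. (if j \<in> blk l then eta else 0)) = of_nat k * eta"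
    unfolding sum_restrict_string[OF l] sum_string_const[OF l(1)] ..
  thus ?thesis unfolding Tblock_def shiftop_def using eta_ne_0 k_ne_0 hbar_def
    by (auto simp: field_simps)
qed

lemma Tsh_inj:
  assumes "i \<in> {1..n+1}" "i' \<in> {1..n+1}" "Tsh n hbar hbar i = Tsh n hbar hbar i'"
  shows "i = i'"
proof (rule ccontr)
  assume "i \<noteq> i'"
  have "Tsh n hbar hbar i i = Tsh n hbar hbar i' i" using assms(3) by simp
  thus False unfolding Tsh_eq[OF assms(1)] Tsh_eq[OF assms(2)] using assms(1) \<open>i \<noteq> i'\<close> by simp
qed

text \<open>Both kinds of shift vectors lie in Vbar: T^hbar_(x_i) for free i does not touch the
  strings, and T^eta_(y_l) is constant along every string.\<close>

lemma Tsh_free_in_Vbar: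
  assumes i: "i \<in> {1..N1}"
  shows "Tsh n hbar hbar i \<in> Vbar n N1 m k"
proof -
  have i': "i \<in> {1..n+1}" using i dim by auto
  have "(\<Sum>j=1..n+1. (if j = i then -1 else 0) + 1 / of_nat (n+1) :: complex)
        = (\<Sum>j=1..n+1. (if j = i then -1 else 0)) + (\<Sum>j=1..n+1. 1 / of_nat (n+1) :: complex)"
    by (rule sum.distrib)
  also have "\<dots> = 0" using i' by (simp add: sum.delta' del: of_nat_Suc)
  finally have sum0: "(\<Sum>j=1..n+1. (if j = i then -1 else 0) + 1 / of_nat (n+1) :: complex) = 0" .
  have "j \<in> {1..n+1} \<and> Suc j \<in> {1..n+1} \<and> j \<noteq> i \<and> Suc j \<noteq> i" if j: "j \<in> S0idx N1 m k" for j
  proof -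
    obtain l where l: "1 \<le> l" "l \<le> m" "j \<in> blk l" "Suc j \<in> blk l"
      by (rule S0idxE[OF j])
    thus ?thesis using string_sub[OF l(1,2)] i by auto
  qed
  thus ?thesis unfolding Tsh_eq[OF i'] Vbar_def Vsp_def using sum0 by auto
qed

lemma Tblock_in_Vbar:
  assumes l: "1 \<le> l" "l \<le> m"
  shows "Tblock n N1 k hbar eta l \<in> Vbar n N1 m k"
proof -
  have "(\<Sum>j=1..n+1. (if j \<in> blk l then - 1 / of_nat k else 0) + 1 / of_nat (n+1) :: complex)
        = (\<Sum>j=1..n+1. (if j \<in> blk l then - 1 / of_nat k else 0)) + (\<Sum>j=1..n+1. 1 / of_nat (n+1) :: complex)"
    by (rule sum.distrib)
  also have "(\<Sum>j=1..n+1. (if j \<in> blk l then - 1 / of_nat k else 0 :: complex)) = -1"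
    unfolding sum_restrict_string[OF l] sum_string_const[OF l(1)] using k_ne_0 by simp
  finally have sum0: "(\<Sum>j=1..n+1. (if j \<in> blk l then - 1 / of_nat k else 0) + 1 / of_nat (n+1) :: complex) = 0"
    by (simp del: of_nat_Suc)
  have "j \<in> {1..n+1} \<and> Suc j \<in> {1..n+1} \<and> (j \<in> blk l \<longleftrightarrow> Suc j \<in> blk l)"
    if j: "j \<in> S0idx N1 m k" for j
  proof -
    obtain l' where l': "1 \<le> l'" "l' \<le> m" "j \<in> blk l'" "Suc j \<in> blk l'"
      by (rule S0idxE[OF j])
    have "j \<in> blk l \<Longrightarrow> l = l'" "Suc j \<in> blk l \<Longrightarrow> l = l'"
      using string_idx_unique l l' by blast+
    thus ?thesis using string_sub[OF l'(1,2)] l' by auto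
  qed
  thus ?thesis unfolding Tblock_eq[OF l] Vbar_def Vsp_def using sum0 by auto
qed

lemma proj_Tsh_free: "i \<in> {1..N1} \<Longrightarrow> proj n N1 m k (Tsh n hbar hbar i) = Tsh n hbar hbar i"
  by (rule proj_eqI[OF Tsh_free_in_Vbar]) (auto simp: binner_def)

lemma Vbar_const_on_string:
  assumes v: "v \<in> Vbar n N1 m k" and l: "1 \<le> l" "l \<le> m" and j: "j \<in> blk l"
  shows "v j = v (N1 + k*l)"
proof -
  have "\<forall>j\<in>S0idx N1 m k. v j - v (Suc j) = 0" using v unfolding Vbar_def by auto
  from string_progression[OF this l, of j "N1 + k*l"] j show ?thesis by simp
qed

text \<open>For i in string l, T^hbar_(x_i) - T^eta_(y_l) is orthogonal to Vbar: pairing it with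
  v gives -v_i + (1/k) sum_(j in string l) v_j = 0 since v is constant along the string.\<close>

lemma proj_Tsh_string:
  assumes l: "1 \<le> l" "l \<le> m" and i: "i \<in> blk l"
  shows "proj n N1 m k (Tsh n hbar hbar i) = Tblock n N1 k hbar eta l"
proof (rule proj_eqI[OF Tblock_in_Vbar[OF l]], intro ballI)
  fix v assume v: "v \<in> Vbar n N1 m k"
  have i': "i \<in> {1..n+1}" using string_sub[OF l] i by auto
  have "binner n (\<lambda>j. Tsh n hbar hbar i j - Tblock n N1 k hbar eta l j) v
      = (\<Sum>j=1..n+1. (if j = i then - v j else 0)) + (\<Sum>j=1..n+1. (if j \<in> blk l then v j / of_nat k else 0))"
    unfolding binner_def Tsh_eq[OF i'] Tblock_eq[OF l] sum.distrib[symmetric]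
    by (rule sum.cong) (auto simp: left_diff_distrib)
  also have "\<dots> = - v i + (\<Sum>j\<in>blk l. v j / of_nat k)"
    unfolding sum_restrict_string[OF l] using i' by (simp add: sum.delta')
  also have "\<dots> = - v i + v (N1 + k*l)"
  proof -
    have "(\<Sum>j\<in>blk l. v j / of_nat k) = (\<Sum>j\<in>blk l. v (N1 + k*l) / of_nat k)"
    proof (rule sum.cong[OF refl])
      fix j assume "j \<in> blk l"
      show "v j / of_nat k = v (N1 + k*l) / of_nat k"
        using Vbar_const_on_string[OF v l \<open>j \<in> blk l\<close>] by simp
    qed
    also have "\<dots> = v (N1 + k*l)"
      unfolding sum_string_const[OF l(1)] using k_ne_0 by simp
    finally show ?thesis by simp
  qed
  also have "\<dots> = 0"
    using Vbar_const_on_string[OF v l i] by simp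
  finally show "binner n (\<lambda>j. Tsh n hbar hbar i j - Tblock n N1 k hbar eta l j) v = 0" .
qed

definition Mcoeff :: "nat \<Rightarrow> vec \<Rightarrow> complex" where
  "Mcoeff i x = (\<Prod>j\<in>{1..n+1}-{i}. cfac t (x j - x i))"

lemma Mop_Tsh: "i \<in> {1..n+1} \<Longrightarrow> Mop n t hbar (Tsh n hbar hbar i) x = Mcoeff i x"
proof -
  assume i: "i \<in> {1..n+1}"
  have "Mop n t hbar (Tsh n hbar hbar i) x = (\<Sum>i'=1..n+1. if i' = i then Mcoeff i' x else 0)"
    unfolding Mop_def Mcoeff_def using Tsh_inj[OF i] by (intro sum.cong) auto
  thus ?thesis using i by (simp add: sum.delta)
qed

lemma Mop_other: "lam \<notin> (\<lambda>i. Tsh n hbar hbar i) ` {1..n+1} \<Longrightarrow> Mop n t hbar lam = (\<lambda>_. 0)"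
  unfolding Mop_def by (rule ext) (rule sum.neutral, auto)

lemma restr_Mop:
  "restr n N1 m k (Mop n t hbar) lam' x =
   (\<Sum>i=1..n+1. if proj n N1 m k (Tsh n hbar hbar i) = lam' then Mcoeff i x else 0)"
proof -
  let ?I = "{i\<in>{1..n+1}. proj n N1 m k (Tsh n hbar hbar i) = lam'}"
  have inj: "inj_on (\<lambda>i. Tsh n hbar hbar i) ?I"
    by (intro inj_onI) (use Tsh_inj in blast)
  have "restr n N1 m k (Mop n t hbar) lam' x
      = (\<Sum>lam\<in>{lam. Mop n t hbar lam \<noteq> (\<lambda>_. 0) \<and> proj n N1 m k lam = lam'}. Mop n t hbar lam x)"
    unfolding restr_def ..
  also have "\<dots> = (\<Sum>lam\<in>{lam \<in> (\<lambda>i. Tsh n hbar hbar i) ` {1..n+1}. proj n N1 m k lam = lam'}. Mop n t hbar lam x)"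
    by (rule sum.mono_neutral_left) (use Mop_other in auto)
  also have "{lam \<in> (\<lambda>i. Tsh n hbar hbar i) ` {1..n+1}. proj n N1 m k lam = lam'} = (\<lambda>i. Tsh n hbar hbar i) ` ?I"
    by auto
  also have "(\<Sum>lam\<in>(\<lambda>i. Tsh n hbar hbar i) ` ?I. Mop n t hbar lam x) = (\<Sum>i\<in>?I. Mcoeff i x)"
    unfolding sum.reindex[OF inj] o_def by (rule sum.cong) (auto simp: Mop_Tsh)
  also have "\<dots> = (\<Sum>i=1..n+1. if proj n N1 m k (Tsh n hbar hbar i) = lam' then Mcoeff i x else 0)"
    by (rule sum.inter_filter) simp
  finally show ?thesis .
qed

definition generic :: "vec set" where
  "generic = {x \<in> D0 n N1 m k eta. \<forall>i\<in>{1..n+1}. \<forall>j\<in>{1..n+1}-{i}. exp (x j - x i) \<noteq> 1}"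

lemma generic_D0: "x \<in> generic \<Longrightarrow> x \<in> D0 n N1 m k eta"
  unfolding generic_def by simp

lemma D0_S0: "x \<in> D0 n N1 m k eta \<Longrightarrow> \<forall>j\<in>S0idx N1 m k. x j - x (Suc j) = eta"
  unfolding D0_def by auto

lemma D0_string:
  assumes x: "x \<in> D0 n N1 m k eta" and l: "1 \<le> l" "l \<le> m" and s: "s < k"
  shows "x (N1 + k*l - s) = x (N1 + k*l) + of_nat s * eta"
proof -
  have "x (N1 + k*l - s) = x (N1 + k*l) + of_nat (N1 + k*l - (N1 + k*l - s)) * eta"
    by (rule string_progression[OF D0_S0[OF x] l]) (use string_mem[OF l(1) s] in auto)
  moreover have "N1 + k*l - (N1 + k*l - s) = s" using string_end[OF l(1)] s by auto
  ultimately show ?thesis by simp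
qed

lemma ycoord_eq:
  assumes x: "x \<in> D0 n N1 m k eta" and l: "1 \<le> l" "l \<le> m"
  shows "ycoord N1 k eta x l = x (N1 + k*l)"
proof -
  have gauss: "(\<Sum>s<K. of_nat s :: complex) * 2 = of_nat K * (of_nat K - 1)" for K
    by (induction K) (auto simp: algebra_simps)
  have "{0..k-1} = {..<k}" using k2 by auto
  hence "(\<Sum>s=0..k-1. x (N1 + k*l - s)) = (\<Sum>s<k. x (N1 + k*l) + of_nat s * eta)"
    by (intro sum.cong) (auto simp: D0_string[OF x l])
  also have "\<dots> = of_nat k * x (N1 + k*l) + of_nat k * (of_nat k - 1) / 2 * eta"
    using gauss[of k] by (simp add: sum.distrib sum_distrib_right[symmetric] eq_divide_eq)
  finally show ?thesis unfolding ycoord_def using k_ne_0 by (simp add: field_simps)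
qed

text \<open>cfac t (-eta) = 0: this is why only the last point of each string contributes.\<close>

lemma cfac_minus_eta: "cfac t (- eta) = 0"
proof -
  have "t * exp (- eta) = inverse t"
    unfolding t_def by (simp add: exp_add[symmetric] exp_minus[symmetric])
  thus ?thesis unfolding cfac_def by simp
qed

lemma Mcoeff_not_last:
  assumes x: "x \<in> D0 n N1 m k eta" and l: "1 \<le> l" "l \<le> m" and s: "1 \<le> s" "s < k"
  shows "Mcoeff (N1 + k*l - s) x = 0"
proof -
  let ?i = "N1 + k*l - s"
  have kl: "k*l = k*(l-1) + k" using string_end[OF l(1)] .
  have "?i \<in> S0idx N1 m k" by (rule S0idxI[OF l, of "k - s"]) (use s kl in auto)
  hence "x (Suc ?i) - x ?i = - eta" using D0_S0[OF x] by (auto simp: algebra_simps)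
  hence "cfac t (x (Suc ?i) - x ?i) = 0" using cfac_minus_eta by simp
  moreover have "Suc ?i \<in> {1..n+1} - {?i}"
    using string_sub[OF l] kl s by auto
  ultimately show ?thesis unfolding Mcoeff_def by (intro prod_zero) blast+
qed

text \<open>The coefficient of M splits into the free factors and one product per string; the
  factor j = i is replaced by 1, so the splitting is uniform in i.\<close>

lemma Mcoeff_split:
  assumes i: "i \<in> {1..n+1}"
  shows "Mcoeff i x = (\<Prod>j\<in>{1..N1}. (if j = i then 1 else cfac t (x j - x i))) *
     (\<Prod>l\<in>{1..m}. \<Prod>s<k. (if N1 + k*l - s = i then 1 else cfac t (x (N1 + k*l - s) - x i)))"
proof -
  define g where "g j = (if j = i then 1 else cfac t (x j - x i))" for j
  have "Mcoeff i x = (\<Prod>j\<in>{1..n+1}-{i}. g j)" unfolding Mcoeff_def g_def by (rule prod.cong) auto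
  also have "\<dots> = (\<Prod>j\<in>{1..n+1}. g j)"
    using prod.remove[of "{1..n+1}" i g] i unfolding g_def by simp
  also have "{1..n+1} = {1..N1} \<union> {N1+1..N1+m*k}" using dim by auto
  also have "(\<Prod>j\<in>\<dots>. g j) = (\<Prod>j\<in>{1..N1}. g j) * (\<Prod>j\<in>{N1+1..N1+m*k}. g j)"
    by (rule prod.union_disjoint) auto
  also have "(\<Prod>j\<in>{N1+1..N1+m*k}. g j) = (\<Prod>l\<in>{1..m}. \<Prod>s<k. g (N1 + k*l - s))"
    by (rule prod_over_strings)
  finally show ?thesis unfolding g_def .
qed

text \<open>A whole string seen from a point i outside it telescopes to a single q-factor.\<close>

lemma string_factor:
  assumes x: "x \<in> generic" and l: "1 \<le> l" "l \<le> m" and i: "i \<in> {1..n+1}"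
    and ni: "\<forall>s<k. N1 + k*l - s \<noteq> i"
  shows "(\<Prod>s<k. (if N1 + k*l - s = i then 1 else cfac t (x (N1 + k*l - s) - x i)))
       = cfac q (ycoord N1 k eta x l - x i)"
proof -
  have xD: "x \<in> D0 n N1 m k eta" using generic_D0[OF x] .
  have ne: "exp (x (N1 + k*l) - x i + of_nat s * eta) \<noteq> 1" if s: "s < k" for s
  proof -
    have "N1 + k*l - s \<in> {1..n+1} - {i}" using string_mem[OF l(1) s] string_sub[OF l] ni s by auto
    hence "exp (x (N1 + k*l - s) - x i) \<noteq> 1" using x i unfolding generic_def by blast
    thus ?thesis using D0_string[OF xD l s] by (simp add: algebra_simps)
  qed
  have "(\<Prod>s<k. (if N1 + k*l - s = i then 1 else cfac t (x (N1 + k*l - s) - x i)))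
      = (\<Prod>s<k. cfac (exp (eta/2)) ((x (N1 + k*l) - x i) + of_nat s * eta))"
    by (rule prod.cong[OF refl]) (use ni D0_string[OF xD l] t_def in \<open>auto simp: algebra_simps\<close>)
  also have "\<dots> = cfac (exp (of_nat k * eta / 2)) (x (N1 + k*l) - x i)"
    by (rule cfac_string_product) (use k2 ne in auto)
  finally show ?thesis unfolding q_eq ycoord_eq[OF xD l] .
qed

lemma Mcoeff_free:
  assumes x: "x \<in> generic" and i: "i \<in> {1..N1}"
  shows "Mcoeff i x = (\<Prod>j\<in>{1..N1}-{i}. cfac t (x j - x i)) * (\<Prod>l'=1..m. cfac q (ycoord N1 k eta x l' - x i))"
proof -
  have i': "i \<in> {1..n+1}" using i dim by auto
  have "(\<Prod>j\<in>{1..N1}. (if j = i then 1 else cfac t (x j - x i))) = (\<Prod>j\<in>{1..N1}-{i}. cfac t (x j - x i))"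
    using prod.remove[of "{1..N1}" i "\<lambda>j. if j = i then 1 else cfac t (x j - x i)"] i
    by (simp add: prod.cong[of "{1..N1}-{i}"])
  moreover have "(\<Prod>l\<in>{1..m}. \<Prod>s<k. (if N1 + k*l - s = i then 1 else cfac t (x (N1 + k*l - s) - x i)))
     = (\<Prod>l'=1..m. cfac q (ycoord N1 k eta x l' - x i))"
  proof (rule prod.cong[OF refl])
    fix l assume l: "l \<in> {1..m}"
    have "\<forall>s<k. N1 + k*l - s \<noteq> i" using string_mem[of l] l i by fastforce
    thus "(\<Prod>s<k. (if N1 + k*l - s = i then 1 else cfac t (x (N1 + k*l - s) - x i)))
          = cfac q (ycoord N1 k eta x l - x i)"
      using string_factor[OF x _ _ i'] l by auto
  qed
  ultimately show ?thesis unfolding Mcoeff_split[OF i'] by simp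
qed

text \<open>Coefficient at the last point N1 + k l0 = y_l0 of a string: the string's own factors
  give (q - 1/q)/(t - 1/t), the other strings give cfac q (y_l' - y_l0).\<close>

lemma Mcoeff_last:
  assumes x: "x \<in> generic" and l0: "1 \<le> l0" "l0 \<le> m"
  shows "Mcoeff (N1 + k*l0) x = (q - inverse q) / (t - inverse t) *
    ((\<Prod>j=1..N1. cfac t (x j - ycoord N1 k eta x l0)) *
     (\<Prod>l'\<in>{1..m}-{l0}. cfac q (ycoord N1 k eta x l' - ycoord N1 k eta x l0)))"
proof -
  let ?i = "N1 + k*l0"
  have xD: "x \<in> D0 n N1 m k eta" using generic_D0[OF x] .
  have i_string: "?i \<in> blk l0" using string_mem[OF l0(1), of 0] k2 by auto
  have i': "?i \<in> {1..n+1}" using i_string string_sub[OF l0] by auto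
  have y0: "ycoord N1 k eta x l0 = x ?i" by (rule ycoord_eq[OF xD l0])
  define h where "h l = (\<Prod>s<k. (if N1 + k*l - s = ?i then 1 else cfac t (x (N1 + k*l - s) - x ?i)))" for l
  have free: "(\<Prod>j\<in>{1..N1}. (if j = ?i then 1 else cfac t (x j - x ?i)))
            = (\<Prod>j=1..N1. cfac t (x j - ycoord N1 k eta x l0))"
    unfolding y0 by (rule prod.cong[OF refl]) (use k2 l0 in auto)
  have "h l0 = (\<Prod>s<k. if s = 0 then 1 else cfac (exp (eta/2)) (of_nat s * eta))"
    unfolding h_def
  proof (rule prod.cong[OF refl])
    fix s assume "s \<in> {..<k}"
    hence s: "s < k" by simp
    have "N1 + k*l0 - s = ?i \<longleftrightarrow> s = 0" using string_end[OF l0(1)] s by auto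
    thus "(if N1 + k*l0 - s = ?i then 1 else cfac t (x (N1 + k*l0 - s) - x ?i)) =
          (if s = 0 then 1 else cfac (exp (eta/2)) (of_nat s * eta))"
      using D0_string[OF xD l0 s] t_def by simp
  qed
  also have "\<dots> = (\<Prod>s<k-1. cfac (exp (eta/2)) (of_nat (Suc s) * eta))"
  proof -
    have "k = Suc (k-1)" using k2 by simp
    thus ?thesis by (subst \<open>k = Suc (k-1)\<close>, subst prod.lessThan_Suc_shift) simp
  qed
  also have "\<dots> = (q - inverse q) / (t - inverse t)"
    unfolding q_eq t_def by (rule cfac_own_string) (use k2 exp_eta_multiple_ne_1 in auto)
  finally have own: "h l0 = (q - inverse q) / (t - inverse t)" .
  have others: "(\<Prod>l\<in>{1..m}-{l0}. h l)
              = (\<Prod>l'\<in>{1..m}-{l0}. cfac q (ycoord N1 k eta x l' - ycoord N1 k eta x l0))"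
  proof (rule prod.cong[OF refl])
    fix l assume l: "l \<in> {1..m}-{l0}"
    have "\<forall>s<k. N1 + k*l - s \<noteq> ?i"
      using string_idx_unique[OF _ i_string] string_mem[of l] l l0 by fastforce
    thus "h l = cfac q (ycoord N1 k eta x l - ycoord N1 k eta x l0)"
      unfolding h_def y0 using string_factor[OF x _ _ i'] l by auto
  qed
  have "(\<Prod>l\<in>{1..m}. h l) = h l0 * (\<Prod>l\<in>{1..m}-{l0}. h l)"
    by (rule prod.remove) (use l0 in auto)
  thus ?thesis unfolding Mcoeff_split[OF i'] free h_def[symmetric] own others by (simp add: mult_ac)
qed


text \<open>Grouping the coefficients by projected shift: the free indices keep their shifts, and
  the k indices of string l all project to T^eta_(y_l), where only the last one survives.\<close>

lemma free_contribution:
  assumes x: "x \<in> generic" and i: "i \<in> {1..N1}"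
  shows "(if proj n N1 m k (Tsh n hbar hbar i) = lam' then Mcoeff i x else 0)
       = (if lam' = Tsh n hbar hbar i then
            (\<Prod>j\<in>{1..N1}-{i}. cfac t (x j - x i)) * (\<Prod>l'=1..m. cfac q (ycoord N1 k eta x l' - x i))
          else 0)"
  unfolding proj_Tsh_free[OF i] Mcoeff_free[OF x i] by auto

lemma string_contribution:
  assumes x: "x \<in> generic" and l: "1 \<le> l" "l \<le> m"
  shows "(\<Sum>s<k. if proj n N1 m k (Tsh n hbar hbar (N1 + k*l - s)) = lam' then Mcoeff (N1 + k*l - s) x else 0)
       = (q - inverse q) / (t - inverse t) * (if lam' = Tblock n N1 k hbar eta l then
            (\<Prod>j=1..N1. cfac t (x j - ycoord N1 k eta x l)) *
            (\<Prod>l'\<in>{1..m}-{l}. cfac q (ycoord N1 k eta x l' - ycoord N1 k eta x l))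
          else 0)"
proof -
  have "(\<Sum>s<k. if proj n N1 m k (Tsh n hbar hbar (N1 + k*l - s)) = lam' then Mcoeff (N1 + k*l - s) x else 0)
      = (if lam' = Tblock n N1 k hbar eta l then (\<Sum>s<k. Mcoeff (N1 + k*l - s) x) else 0)"
    using proj_Tsh_string[OF l string_mem[OF l(1)]] by (simp add: sum.neutral)
  also have "(\<Sum>s<k. Mcoeff (N1 + k*l - s) x) = Mcoeff (N1 + k*l) x"
  proof -
    have "k = Suc (k-1)" using k2 by simp
    hence "(\<Sum>s<k. Mcoeff (N1 + k*l - s) x) = Mcoeff (N1 + k*l) x + (\<Sum>s<k-1. Mcoeff (N1 + k*l - Suc s) x)"
      by (subst \<open>k = Suc (k-1)\<close>, subst sum.lessThan_Suc_shift) simp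
    also have "(\<Sum>s<k-1. Mcoeff (N1 + k*l - Suc s) x) = 0"
      by (rule sum.neutral) (use Mcoeff_not_last[OF generic_D0[OF x] l] in auto)
    finally show ?thesis by simp
  qed
  finally show ?thesis unfolding Mcoeff_last[OF x l] by simp
qed

lemma restr_Mop_generic:
  assumes x: "x \<in> generic"
  shows "restr n N1 m k (Mop n t hbar) lam' x = Mbar n N1 m k eta t q hbar lam' x"
proof -
  let ?f = "\<lambda>i. if proj n N1 m k (Tsh n hbar hbar i) = lam' then Mcoeff i x else 0"
  have "restr n N1 m k (Mop n t hbar) lam' x = (\<Sum>i=1..n+1. ?f i)" by (rule restr_Mop)
  also have "{1..n+1} = {1..N1} \<union> {N1+1..N1+m*k}" using dim by auto
  also have "(\<Sum>i\<in>\<dots>. ?f i) = (\<Sum>i\<in>{1..N1}. ?f i) + (\<Sum>i\<in>{N1+1..N1+m*k}. ?f i)"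
    by (rule sum.union_disjoint) auto
  also have "(\<Sum>i\<in>{N1+1..N1+m*k}. ?f i) = (\<Sum>l\<in>{1..m}. \<Sum>s<k. ?f (N1 + k*l - s))"
    by (rule sum_over_strings)
  also have "(\<Sum>i\<in>{1..N1}. ?f i) = (\<Sum>i=1..N1. if lam' = Tsh n hbar hbar i then
         (\<Prod>j\<in>{1..N1}-{i}. cfac t (x j - x i)) * (\<Prod>l'=1..m. cfac q (ycoord N1 k eta x l' - x i))
       else 0)"
    by (rule sum.cong[OF refl]) (rule free_contribution[OF x], simp)
  also have "(\<Sum>l\<in>{1..m}. \<Sum>s<k. ?f (N1 + k*l - s))
      = (q - inverse q) / (t - inverse t) * (\<Sum>l=1..m. if lam' = Tblock n N1 k hbar eta l then
         (\<Prod>j=1..N1. cfac t (x j - ycoord N1 k eta x l)) *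
         (\<Prod>l'\<in>{1..m}-{l}. cfac q (ycoord N1 k eta x l' - ycoord N1 k eta x l))
       else 0)"
    unfolding sum_distrib_left by (rule sum.cong[OF refl]) (rule string_contribution[OF x], auto)
  finally show ?thesis unfolding Mbar_def .
qed

lemma generic_openin: "openin (top_of_set (D0 n N1 m k eta)) generic"
proof -
  have "open {x::vec. exp (x j - x i) \<noteq> 1}" for i j
    by (intro open_Collect_neq continuous_on_exp continuous_on_diff continuous_on_product_coordinates
        continuous_on_const)
  hence "open (\<Inter>i\<in>{1..n+1}. \<Inter>j\<in>{1..n+1}-{i}. {x::vec. exp (x j - x i) \<noteq> 1})"
    by (intro open_INT) auto
  moreover have "generic = D0 n N1 m k eta \<inter> (\<Inter>i\<in>{1..n+1}. \<Inter>j\<in>{1..n+1}-{i}. {x. exp (x j - x i) \<noteq> 1})"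
    unfolding generic_def by auto
  ultimately show ?thesis by (simp add: openin_open_Int)
qed

text \<open>Label each index by its part: free indices by themselves, string l by N1 + l.
  Two points of a common string always differ by a nonzero multiple of eta, so their factor
  is never singular on D0; pairs in different parts are separated by moving along the
  direction w in Vbar that is constant on parts with distinct values on distinct parts.\<close>

definition part :: "nat \<Rightarrow> nat" where
  "part j = (if j \<le> N1 then j else N1 + (j - N1 - 1) div k + 1)"

lemma part_string:
  assumes l: "1 \<le> l" and j: "j \<in> blk l"
  shows "part j = N1 + l"
proof -
  obtain r where r: "j - N1 - 1 = k*(l-1) + r" "r < k" using j string_end[OF l]
    by (intro that[of "j - N1 - 1 - k*(l-1)"]) auto
  have "(j - N1 - 1) div k = l - 1" unfolding r using r(2) k2 by simp
  moreover have "\<not> j \<le> N1" using j by auto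
  ultimately show ?thesis unfolding part_def using l by simp
qed

lemma index_cases:
  assumes i: "i \<in> {1..n+1}"
  shows "i \<le> N1 \<or> (\<exists>l. 1 \<le> l \<and> l \<le> m \<and> i \<in> blk l)"
proof (cases "i \<le> N1")
  case False
  define r where "r = (i - N1 - 1) div k"
  have a: "k * r \<le> i - N1 - 1" unfolding r_def by (simp add: mult.commute div_times_less_eq_dividend)
  have "k > 0" using k2 by simp
  hence b: "i - N1 - 1 < k * r + k" unfolding r_def
    by (metis add.commute div_mult_mod_eq mod_less_divisor mult.commute nat_add_left_cancel_less)
  have "i \<le> N1 + k * m" using i dim by (simp add: mult.commute)
  hence "k * r < k * m" using a False by linarith
  hence "r < m" by simp
  moreover have "i \<in> blk (r+1)" using a b False by auto
  ultimately show ?thesis by (intro disjI2 exI[of _ "r+1"]) auto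
qed simp

lemma same_part_same_string:
  assumes i: "i \<in> {1..n+1}" and j: "j \<in> {1..n+1}" and ij: "i \<noteq> j" and p: "part i = part j"
  obtains l where "1 \<le> l" "l \<le> m" "i \<in> blk l" "j \<in> blk l"
proof -
  have free_separated: False if a: "a \<le> N1" and b: "b \<in> {1..n+1}" "a \<noteq> b" "part a = part b" for a b
  proof -
    have pa: "part a = a" using a unfolding part_def by simp
    from index_cases[OF b(1)] show False
    proof
      assume "b \<le> N1"
      thus False using b pa unfolding part_def by simp
    next
      assume "\<exists>l. 1 \<le> l \<and> l \<le> m \<and> b \<in> blk l"
      then obtain l where "1 \<le> l" "b \<in> blk l" by blast
      hence "part b = N1 + l" by (rule part_string)
      thus False using a b pa \<open>1 \<le> l\<close> by simp
    qed
  qed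
  have "\<not> i \<le> N1" "\<not> j \<le> N1" using free_separated[of i j] free_separated[of j i] i j ij p by auto
  then obtain li lj where li: "1 \<le> li" "li \<le> m" "i \<in> blk li" and lj: "1 \<le> lj" "lj \<le> m" "j \<in> blk lj"
    using index_cases[OF i] index_cases[OF j] by blast
  have "li = lj" using part_string[OF li(1,3)] part_string[OF lj(1,3)] p by simp
  thus ?thesis using that li lj by blast
qed

lemma exp_diff_same_string:
  assumes x: "x \<in> D0 n N1 m k eta" and l: "1 \<le> l" "l \<le> m"
    and i: "i \<in> blk l" and j: "j \<in> blk l" and ij: "i < j"
  shows "exp (x j - x i) \<noteq> 1" and "exp (x i - x j) \<noteq> 1"
proof -
  have "x i = x j + of_nat (j - i) * eta"
    by (rule string_progression[OF D0_S0[OF x] l]) (use i j ij in auto)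
  hence "x i - x j = of_nat (j - i) * eta" "x j - x i = - (of_nat (j - i) * eta)" by simp_all
  moreover have "exp (of_nat (j - i) * eta) \<noteq> 1" using ij by (intro exp_eta_multiple_ne_1) simp
  ultimately show "exp (x j - x i) \<noteq> 1" "exp (x i - x j) \<noteq> 1" by (simp_all add: exp_minus)
qed

definition separating_dir :: vec where
  "separating_dir j = (if j \<in> {1..n+1}
     then of_nat (part j) - (\<Sum>i=1..n+1. of_nat (part i)) / of_nat (n+1) else 0)"

lemma separating_dir_Vbar: "separating_dir \<in> Vbar n N1 m k"
proof -
  have "(\<Sum>j=1..n+1. separating_dir j)
      = (\<Sum>j=1..n+1. of_nat (part j)) - (\<Sum>j=1..n+1. (\<Sum>i=1..n+1. of_nat (part i)) / (of_nat (n+1) :: complex))"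
    unfolding separating_dir_def sum_subtractf[symmetric] by (rule sum.cong) auto
  also have "\<dots> = 0" by (simp del: of_nat_Suc)
  finally have "(\<Sum>j=1..n+1. separating_dir j) = 0" .
  moreover have "separating_dir j = separating_dir (Suc j)" if j: "j \<in> S0idx N1 m k" for j
  proof -
    obtain l where l: "1 \<le> l" "l \<le> m" "j \<in> blk l" "Suc j \<in> blk l" by (rule S0idxE[OF j])
    thus ?thesis using part_string[OF l(1)] string_sub[OF l(1,2)] unfolding separating_dir_def by auto
  qed
  ultimately show ?thesis unfolding Vbar_def Vsp_def by (auto simp: separating_dir_def)
qed

text \<open>The parameters e for which x + e w fails to be generic, for x in D0.\<close>

definition bad_params :: "vec \<Rightarrow> real set" where
  "bad_params x = (\<Union>(i, j)\<in>{(i, j). i \<in> {1..n+1} \<and> j \<in> {1..n+1} \<and> part i \<noteq> part j}.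
      {e. exp ((x j - x i) + of_real e * (separating_dir j - separating_dir i)) = 1})"

lemma bad_params_countable: "countable (bad_params x)"
  unfolding bad_params_def
proof (intro countable_UN ballI)
  show "countable {(i, j). i \<in> {1..n+1} \<and> j \<in> {1..n+1} \<and> part i \<noteq> part j}"
    by (rule countable_finite, rule finite_subset[of _ "{1..n+1} \<times> {1..n+1}"]) auto
next
  fix p assume "p \<in> {(i, j). i \<in> {1..n+1} \<and> j \<in> {1..n+1} \<and> part i \<noteq> part j}"
  then obtain i j where p: "p = (i, j)" "i \<in> {1..n+1}" "j \<in> {1..n+1}" "part i \<noteq> part j" by auto
  hence "separating_dir j - separating_dir i \<noteq> 0" unfolding separating_dir_def by auto
  thus "countable (case p of (i, j) \<Rightarrow>
          {e. exp ((x j - x i) + of_real e * (separating_dir j - separating_dir i)) = 1})"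
    unfolding p(1) by (simp add: countable_exp_line_eq_1)
qed

lemma perturbation_generic:
  assumes x: "x \<in> D0 n N1 m k eta" and e: "e \<notin> bad_params x"
  shows "(\<lambda>j. x j + of_real e * separating_dir j) \<in> generic"
proof -
  let ?y = "\<lambda>j. x j + of_real e * separating_dir j"
  have "exp (?y j - ?y i) \<noteq> 1" if i: "i \<in> {1..n+1}" and j: "j \<in> {1..n+1}-{i}" for i j
  proof (cases "part i = part j")
    case True
    then obtain l where l: "1 \<le> l" "l \<le> m" "i \<in> blk l" "j \<in> blk l"
      using same_part_same_string[OF i] j by blast
    have "separating_dir i = separating_dir j" using True i j unfolding separating_dir_def by auto
    moreover have "exp (x j - x i) \<noteq> 1"
      using exp_diff_same_string[OF x l(1,2)] l j by (cases "i < j") (auto simp: not_less le_less)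
    ultimately show ?thesis by simp
  next
    case False
    hence "exp ((x j - x i) + of_real e * (separating_dir j - separating_dir i)) \<noteq> 1"
      using e i j unfolding bad_params_def by blast
    thus ?thesis by (simp add: algebra_simps)
  qed
  moreover have "?y \<in> D0 n N1 m k eta" by (rule D0_translate[OF x Vbar_scale[OF separating_dir_Vbar]])
  ultimately show ?thesis unfolding generic_def by blast
qed

lemma generic_dense: "D0 n N1 m k eta \<subseteq> closure generic"
proof
  fix x assume x: "x \<in> D0 n N1 m k eta"
  obtain eps where eps: "eps \<longlonglongrightarrow> 0" "\<And>N. eps N \<notin> bad_params x"
    using null_sequence_avoiding[OF bad_params_countable] by blast
  define phi where "phi e = (\<lambda>j. x j + of_real e * separating_dir j)" for e :: real
  have "continuous_on UNIV phi" unfolding phi_def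
    by (intro continuous_on_coordinatewise_then_product continuous_intros)
  hence "(\<lambda>N. phi (eps N)) \<longlonglongrightarrow> phi 0"
    using eps(1) by (intro isCont_tendsto_compose[of 0 phi]) (simp_all add: continuous_on_eq_continuous_at)
  moreover have "phi 0 = x" unfolding phi_def by simp
  moreover have "phi (eps N) \<in> generic" for N
    unfolding phi_def by (rule perturbation_generic[OF x eps(2)])
  ultimately show "x \<in> closure generic"
    by (metis closure_sequential)
qed

end

theorem mainTheorem14:
  fixes n N1 m k :: nat and eta hbar t q :: complex
  assumes "k \<ge> 2" and "m \<ge> 1" and "n + 1 = N1 + m * k"
    and "hbar = of_nat k * eta"
    and "\<forall>r\<in>\<rat>. hbar \<noteq> of_real pi * \<i> * r"
    and "t = exp (eta / 2)" and "q = exp (hbar / 2)"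
  shows "\<exists>G. G \<subseteq> D0 n N1 m k eta
           \<and> openin (top_of_set (D0 n N1 m k eta)) G
           \<and> D0 n N1 m k eta \<subseteq> closure G
           \<and> (\<forall>x\<in>G. \<forall>i\<in>{1..n+1}. \<forall>j\<in>{1..n+1}-{i}. exp (x j - x i) \<noteq> 1)
           \<and> (\<forall>lam'. \<forall>x\<in>G. restr n N1 m k (Mop n t hbar) lam' x
                               = Mbar n N1 m k eta t q hbar lam' x)"
proof -
  interpret string_restriction n N1 m k eta hbar t q
    using assms by unfold_locales
  show ?thesis
  proof (intro exI[of _ generic] conjI allI ballI)
    show "generic \<subseteq> D0 n N1 m k eta" using generic_D0 by blast
    show "openin (top_of_set (D0 n N1 m k eta)) generic" by (rule generic_openin)
    show "D0 n N1 m k eta \<subseteq> closure generic" by (rule generic_dense)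
    show "exp (x j - x i) \<noteq> 1" if "x \<in> generic" "i \<in> {1..n+1}" "j \<in> {1..n+1}-{i}" for x i j
      using that unfolding generic_def by blast
    show "restr n N1 m k (Mop n t hbar) lam' x = Mbar n N1 m k eta t q hbar lam' x"
      if "x \<in> generic" for lam' x
      by (rule restr_Mop_generic[OF that])
  qed
qed

end
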